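(* Let $(S_n)_{n\ge0}=((S_n^{(1)},S_n^{(2)}))_{n\ge 0}$ be a random walk in $\mathbb Z^2$ with $S_0=(0,0)$ and i.i.d. increments $\mathcal X_k$ satisfying $$P(\mathcal X_k=(1,0))=\omega,\quad P(\mathcal X_k=(-1,0))=\varepsilon,\quad P(\mathcal X_k=(0,1))=\gamma,\quad P(\mathcal X_k=(0,-1))=\delta,$$ where $\omega,\varepsilon,\gamma,\delta\ge0$ and $\omega+\varepsilon+\gamma+\delta=1$. Then for every $n\ge1$, $x=0,1,\dots,n$ and $-n\le y\le n$, $$P\big(S_n^{(2)}=y\mid S_n^{(1)}=x\big)=P\big(S_n^{(2)}=y\mid S_n^{(1)}=-x\big).$$
   Context: Conditional probabilities are considered for conditioning events of positive probability. *)

theory Defs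
  imports "HOL-Probability.Probability"
begin

definition step_pmf :: "real \<Rightarrow> real \<Rightarrow> real \<Rightarrow> real \<Rightarrow> (int \<times> int) pmf" where
  "step_pmf \<omega> \<epsilon> \<gamma> \<delta> =
     pmf_of_list [((1,0), \<omega>), ((-1,0), \<epsilon>), ((0,1), \<gamma>), ((0,-1), \<delta>)]"

definition walk_pmf :: "real \<Rightarrow> real \<Rightarrow> real \<Rightarrow> real \<Rightarrow> nat \<Rightarrow> (int \<times> int) pmf" where
  "walk_pmf \<omega> \<epsilon> \<gamma> \<delta> n =
     map_pmf (\<lambda>X. (\<Sum>k<n. fst (X k), \<Sum>k<n. snd (X k)))
       (Pi_pmf {..<n} (0,0) (\<lambda>_. step_pmf \<omega> \<epsilon> \<gamma> \<delta>))"

definition cond_prob :: "'a pmf \<Rightarrow> 'a set \<Rightarrow> 'a set \<Rightarrow> real" where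
  "cond_prob p A B = measure_pmf.prob p (A \<inter> B) / measure_pmf.prob p B"

end

theory Submission
  imports Defs
begin

text \<open>Reflecting the horizontal steps of a path ending in \<open>(k, y)\<close> gives a path ending in
  \<open>(-k, y)\<close>; it trades \<open>k\<close> right steps for left steps, so its weight changes by the factor
  \<open>(\<epsilon>/\<omega>)^k\<close>, independently of the vertical steps. Hence
  \<open>P(S\<^sub>n \<in> {k} \<times> B) \<epsilon>^k = P(S\<^sub>n \<in> {-k} \<times> B) \<omega>^k\<close> for every set \<open>B\<close>, which we prove by induction
  on \<open>n\<close> via the one-step recursion. Taking \<open>B = {y}\<close> and \<open>B = \<int>\<close> and dividing gives the
  theorem, provided \<open>\<omega>, \<epsilon> \<noteq> 0\<close>; otherwise at most one of \<open>\<plusminus>k\<close> is reachable for \<open>k > 0\<close>.\<close>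

lemma measure_bind_pmf:
  "measure_pmf.prob (bind_pmf M N) X = (\<integral>x. measure_pmf.prob (N x) X \<partial>measure_pmf M)"
  unfolding measure_pmf_bind
  by (rule measure_pmf.measure_bind[where N = "count_space UNIV"])
     (auto intro!: measurable_pmf_measure1 simp: space_subprob_algebra measure_pmf.subprob_space_axioms)

locale lattice_walk =
  fixes \<omega> \<epsilon> \<gamma> \<delta> :: real
  assumes nonneg: "\<omega> \<ge> 0" "\<epsilon> \<ge> 0" "\<gamma> \<ge> 0" "\<delta> \<ge> 0"
    and sum_eq_1: "\<omega> + \<epsilon> + \<gamma> + \<delta> = 1"
begin

abbreviation step :: "(int \<times> int) pmf" where
  "step \<equiv> step_pmf \<omega> \<epsilon> \<gamma> \<delta>"

abbreviation walk :: "nat \<Rightarrow> (int \<times> int) pmf" where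
  "walk \<equiv> walk_pmf \<omega> \<epsilon> \<gamma> \<delta>"

lemma step_pmf_wf: "pmf_of_list_wf [((1::int, 0::int), \<omega>), ((-1, 0), \<epsilon>), ((0, 1), \<gamma>), ((0, -1), \<delta>)]"
  using nonneg sum_eq_1 by (intro pmf_of_list_wfI) auto

lemma set_pmf_step: "set_pmf step \<subseteq> {(1, 0), (-1, 0), (0, 1), (0, -1)}"
  unfolding step_pmf_def using set_pmf_of_list[OF step_pmf_wf] by auto

lemma pmf_step [simp]:
  "pmf step (1, 0) = \<omega>" "pmf step (-1, 0) = \<epsilon>" "pmf step (0, 1) = \<gamma>" "pmf step (0, -1) = \<delta>"
  unfolding step_pmf_def by (simp_all add: pmf_pmf_of_list[OF step_pmf_wf])

lemma walk_0: "walk 0 = return_pmf (0, 0)"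
  unfolding walk_pmf_def by simp

lemma walk_Suc:
  "walk (Suc n) = bind_pmf step (\<lambda>d. map_pmf (\<lambda>s. (fst s + fst d, snd s + snd d)) (walk n))"
proof -
  let ?X = "Pi_pmf {..<n} (0, 0) (\<lambda>_. step)"
  have "Pi_pmf {..<Suc n} (0, 0) (\<lambda>_. step) = map_pmf (\<lambda>(d, X). X(n := d)) (pair_pmf step ?X)"
    using Pi_pmf_insert[of "{..<n}" n] by (simp add: lessThan_Suc)
  moreover have "(\<Sum>k<n. g ((X(n := d)) k)) = (\<Sum>k<n. g (X k))" for g :: "int \<times> int \<Rightarrow> int" and X d
    by (intro sum.cong) auto
  ultimately show ?thesis
    unfolding walk_pmf_def pair_pmf_def map_bind_pmf
    by (simp add: map_pmf_def bind_assoc_pmf bind_return_pmf add.commute)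
qed

lemma prob_walk_Suc:
  "measure_pmf.prob (walk (Suc n)) A =
     \<omega> * measure_pmf.prob (walk n) {s. (fst s + 1, snd s) \<in> A}
   + \<epsilon> * measure_pmf.prob (walk n) {s. (fst s - 1, snd s) \<in> A}
   + \<gamma> * measure_pmf.prob (walk n) {s. (fst s, snd s + 1) \<in> A}
   + \<delta> * measure_pmf.prob (walk n) {s. (fst s, snd s - 1) \<in> A}"
proof -
  let ?F = "\<lambda>d. measure_pmf.prob (walk n) {s. (fst s + fst d, snd s + snd d) \<in> A}"
  have "measure_pmf.prob (walk (Suc n)) A = (\<integral>d. ?F d \<partial>measure_pmf step)"
    by (simp add: walk_Suc measure_bind_pmf vimage_def)
  also have "\<dots> = (\<Sum>d\<in>{(1, 0), (-1, 0), (0, 1), (0, -1)}. ?F d * pmf step d)"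
    using set_pmf_step by (intro integral_measure_pmf_real) auto
  finally show ?thesis
    by (simp add: algebra_simps)
qed

lemma prob_walk_Suc_slice:
  "measure_pmf.prob (walk (Suc n)) {S. fst S = x \<and> snd S \<in> B} =
     \<omega> * measure_pmf.prob (walk n) {S. fst S = x - 1 \<and> snd S \<in> B}
   + \<epsilon> * measure_pmf.prob (walk n) {S. fst S = x + 1 \<and> snd S \<in> B}
   + \<gamma> * measure_pmf.prob (walk n) {S. fst S = x \<and> snd S \<in> (\<lambda>y. y + 1) -` B}
   + \<delta> * measure_pmf.prob (walk n) {S. fst S = x \<and> snd S \<in> (\<lambda>y. y - 1) -` B}"
  by (simp add: prob_walk_Suc eq_diff_eq diff_eq_eq)

lemma prob_walk_reflect:
  "measure_pmf.prob (walk n) {S. fst S = int k \<and> snd S \<in> B} * \<epsilon> ^ k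
   = measure_pmf.prob (walk n) {S. fst S = - int k \<and> snd S \<in> B} * \<omega> ^ k"
proof (induction n arbitrary: k B)
  case 0
  show ?case by (cases k) (auto simp: walk_0)
next
  case (Suc n)
  let ?P = "\<lambda>x B. measure_pmf.prob (walk n) {S. fst S = x \<and> snd S \<in> B}"
  show ?case
  proof (cases k)
    case 0
    then show ?thesis by simp
  next
    case (Suc j)
    have shifts: "int k - 1 = int j" "int k + 1 = int (Suc k)"
      "- int k - 1 = - int (Suc k)" "- int k + 1 = - int j"
      using Suc by simp_all
    have left: "\<omega> * ?P (int j) B * \<epsilon> ^ k = \<epsilon> * ?P (- int j) B * \<omega> ^ k"
      using Suc.IH[of j B] Suc by (simp add: ac_simps)
    have right: "\<epsilon> * ?P (int (Suc k)) B * \<epsilon> ^ k = \<omega> * ?P (- int (Suc k)) B * \<omega> ^ k"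
      using Suc.IH[of "Suc k" B] by (simp add: ac_simps)
    have vertical: "c * ?P (int k) B' * \<epsilon> ^ k = c * ?P (- int k) B' * \<omega> ^ k" for c B'
      using Suc.IH[of k B'] by (simp only: mult.assoc)
    show ?thesis
      unfolding prob_walk_Suc_slice shifts distrib_right
      using left right vertical[of \<gamma> "(\<lambda>y. y + 1) -` B"] vertical[of \<delta> "(\<lambda>y. y - 1) -` B"]
      by linarith
  qed
qed

lemma prob_walk_fst_nonzero:
  assumes "\<omega> = 0" "\<epsilon> = 0"
  shows "measure_pmf.prob (walk n) {S. fst S \<noteq> 0} = 0"
proof (induction n)
  case 0
  show ?case by (simp add: walk_0)
next
  case (Suc n)
  then show ?case
    unfolding prob_walk_Suc by (simp add: assms)
qed

lemma horizontal_probs_nonzero: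
  assumes "k > 0"
    and "measure_pmf.prob (walk n) {S. fst S = int k} > 0"
    and "measure_pmf.prob (walk n) {S. fst S = - int k} > 0"
  shows "\<omega> \<noteq> 0" "\<epsilon> \<noteq> 0"
proof -
  have reflect: "measure_pmf.prob (walk n) {S. fst S = int k} * \<epsilon> ^ k
    = measure_pmf.prob (walk n) {S. fst S = - int k} * \<omega> ^ k"
    using prob_walk_reflect[of n k UNIV] by simp
  have "\<not> (\<omega> = 0 \<and> \<epsilon> = 0)"
  proof
    assume "\<omega> = 0 \<and> \<epsilon> = 0"
    moreover have "measure_pmf.prob (walk n) {S. fst S = int k} \<le> measure_pmf.prob (walk n) {S. fst S \<noteq> 0}"
      using \<open>k > 0\<close> by (intro measure_pmf.finite_measure_mono) auto
    ultimately show False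
      using prob_walk_fst_nonzero[of n] assms(2) by simp
  qed
  with reflect assms show "\<omega> \<noteq> 0" "\<epsilon> \<noteq> 0"
    by (auto simp: power_0_left)
qed

end

theorem theorem1:
  fixes \<omega> \<epsilon> \<gamma> \<delta> :: real and n :: nat and x y :: int
  assumes "\<omega> \<ge> 0" "\<epsilon> \<ge> 0" "\<gamma> \<ge> 0" "\<delta> \<ge> 0"
    and "\<omega> + \<epsilon> + \<gamma> + \<delta> = 1"
    and "n \<ge> 1"
    and "0 \<le> x" "x \<le> int n"
    and "- int n \<le> y" "y \<le> int n"
    and "measure_pmf.prob (walk_pmf \<omega> \<epsilon> \<gamma> \<delta> n) {S. fst S = x} > 0"
    and "measure_pmf.prob (walk_pmf \<omega> \<epsilon> \<gamma> \<delta> n) {S. fst S = - x} > 0"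
  shows "cond_prob (walk_pmf \<omega> \<epsilon> \<gamma> \<delta> n) {S. snd S = y} {S. fst S = x}
       = cond_prob (walk_pmf \<omega> \<epsilon> \<gamma> \<delta> n) {S. snd S = y} {S. fst S = - x}"
proof -
  interpret lattice_walk \<omega> \<epsilon> \<gamma> \<delta>
    using assms(1-5) by unfold_locales
  obtain k where x: "x = int k"
    using zero_le_imp_eq_int[OF \<open>0 \<le> x\<close>] by blast
  let ?P = "\<lambda>x B. measure_pmf.prob (walk n) {S. fst S = x \<and> snd S \<in> B}"
  have cond_prob_slice: "cond_prob (walk n) {S. snd S = y} {S. fst S = z} = ?P z {y} / ?P z UNIV" for z
    unfolding cond_prob_def by (simp add: Int_def conj_commute)
  show ?thesis
  proof (cases "k = 0")
    case True
    then show ?thesis using x by simp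
  next
    case False
    then have powers_nonzero: "\<epsilon> ^ k \<noteq> 0" "\<omega> ^ k \<noteq> 0"
      using horizontal_probs_nonzero[of k n] assms(11,12) x by auto
    have "?P (int k) {y} / ?P (int k) UNIV = (?P (int k) {y} * \<epsilon> ^ k) / (?P (int k) UNIV * \<epsilon> ^ k)"
      using powers_nonzero by simp
    also have "\<dots> = (?P (- int k) {y} * \<omega> ^ k) / (?P (- int k) UNIV * \<omega> ^ k)"
      by (simp only: prob_walk_reflect)
    also have "\<dots> = ?P (- int k) {y} / ?P (- int k) UNIV"
      using powers_nonzero by simp
    finally show ?thesis
      unfolding cond_prob_slice x .
  qed
qed

end
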